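(* Let $1/n\ll\gamma\ll\tau\ll\alpha\ll 1$, let $k\in\mathbb{N}$, and let $G$ be a $d$-regular digraph on $n$ vertices with $d\geq\alpha n$. Suppose $\mathcal{P}_k=\{V_{ij}:i,j\in[k]\}$ is an extremal $(k^2,\tau,\gamma)$-partition of $G$. Then for all $i,j\in[k]$ and every $w\in V_{ij}$ we have $d^+_{V_{*i'}}(w)\leq d^+_{V_{*i}}(w)$ and $d^-_{V_{j'*}}(w)\leq d^-_{V_{j*}}(w)$ for all $i',j'\in[k]$. In particular, $d^-_{V_{j'*}}(w),\,d^+_{V_{*i'}}(w)\leq d/2$ for all $i'\neq i$ and $j'\neq j$, and $d^+_{\mathcal{G}_k(\mathcal{P}_k,G)}(v),\,d^-_{\mathcal{G}_k(\mathcal{P}_k,G)}(v)\geq d/k$ for all $v\in V(G)$.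
   Context: Hierarchy convention: $x\ll y$ means $x\leq f(y)$ for some implicitly given non-decreasing function $f:(0,1]\to(0,1]$; the statement asserts such functions exist, constants chosen from right to left. $d$-regular: all in- and outdegrees equal $d$. For $S\subseteq V(G)$, $d^+_S(v)=|N^+(v)\cap S|$ and $d^-_S(v)=|N^-(v)\cap S|$. A $k^2$-partition of $V(G)$ is a family $\{V_{ij}:i,j\in[k]\}$ of pairwise disjoint (possibly empty) sets with union $V(G)$; $V_{i*}=\bigcup_j V_{ij}$, $V_{*j}=\bigcup_i V_{ij}$. $E(A,B)$ is the set of edges $ab$ with $a\in A,b\in B$. Good edges: $\mathcal{G}_k(\mathcal{P}_k,G)=\bigcup_i E(V_{i*},V_{*i})$; bad edges: $\mathcal{B}_k(\mathcal{P}_k,G)=\bigcup_{i\neq j}E(V_{i*},V_{*j})$. $d^{\pm}_{\mathcal{G}_k(\mathcal{P}_k,G)}(v)$ denotes the out/indegree of $v$ in the spanning subdigraph with edge set $\mathcal{G}_k(\mathcal{P}_k,G)$. A $(k^2,\tau,\gamma)$-partition of an $n$-vertex digraph is a $k^2$-partition with $|\mathcal{B}_k(\mathcal{P}_k,G)|\leq\gamma n^2$ and $|V_{i*}|,|V_{*j}|\geq\tau n$ for all $i,j$. It is extremal if $|\mathcal{B}_k(\mathcal{P}_k,G)|\leq|\mathcal{B}_k(\mathcal{P}'_k,G)|$ for every $(k^2,\tau,\gamma)$-partition $\mathcal{P}'_k$ of $V(G)$. *)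

theory Defs
  imports Complex_Main
begin

definition digraph :: "'a set \<Rightarrow> ('a \<times> 'a) set \<Rightarrow> bool" where
  "digraph V E \<longleftrightarrow> finite V \<and> E \<subseteq> V \<times> V \<and> (\<forall>v. (v, v) \<notin> E)"

definition outdeg_in :: "('a \<times> 'a) set \<Rightarrow> 'a set \<Rightarrow> 'a \<Rightarrow> nat" where
  "outdeg_in E S v = card {u \<in> S. (v, u) \<in> E}"

definition indeg_in :: "('a \<times> 'a) set \<Rightarrow> 'a set \<Rightarrow> 'a \<Rightarrow> nat" where
  "indeg_in E S v = card {u \<in> S. (u, v) \<in> E}"

definition regular_digraph :: "'a set \<Rightarrow> ('a \<times> 'a) set \<Rightarrow> nat \<Rightarrow> bool" where
  "regular_digraph V E d \<longleftrightarrow> digraph V E \<and>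
     (\<forall>v\<in>V. outdeg_in E V v = d \<and> indeg_in E V v = d)"

definition k2_partition :: "'a set \<Rightarrow> nat \<Rightarrow> (nat \<Rightarrow> nat \<Rightarrow> 'a set) \<Rightarrow> bool" where
  "k2_partition V k P \<longleftrightarrow>
     (\<forall>i\<in>{1..k}. \<forall>j\<in>{1..k}. \<forall>i'\<in>{1..k}. \<forall>j'\<in>{1..k}.
        (i, j) \<noteq> (i', j') \<longrightarrow> P i j \<inter> P i' j' = {}) \<and>
     (\<Union>i\<in>{1..k}. \<Union>j\<in>{1..k}. P i j) = V"

definition Vrow :: "nat \<Rightarrow> (nat \<Rightarrow> nat \<Rightarrow> 'a set) \<Rightarrow> nat \<Rightarrow> 'a set" where
  "Vrow k P i = (\<Union>j\<in>{1..k}. P i j)"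

definition Vcol :: "nat \<Rightarrow> (nat \<Rightarrow> nat \<Rightarrow> 'a set) \<Rightarrow> nat \<Rightarrow> 'a set" where
  "Vcol k P j = (\<Union>i\<in>{1..k}. P i j)"

definition edges_between :: "('a \<times> 'a) set \<Rightarrow> 'a set \<Rightarrow> 'a set \<Rightarrow> ('a \<times> 'a) set" where
  "edges_between E A B = {(a, b) \<in> E. a \<in> A \<and> b \<in> B}"

definition good_edges :: "nat \<Rightarrow> (nat \<Rightarrow> nat \<Rightarrow> 'a set) \<Rightarrow> ('a \<times> 'a) set \<Rightarrow> ('a \<times> 'a) set" where
  "good_edges k P E = (\<Union>i\<in>{1..k}. edges_between E (Vrow k P i) (Vcol k P i))"

definition bad_edges :: "nat \<Rightarrow> (nat \<Rightarrow> nat \<Rightarrow> 'a set) \<Rightarrow> ('a \<times> 'a) set \<Rightarrow> ('a \<times> 'a) set" where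
  "bad_edges k P E = (\<Union>i\<in>{1..k}. \<Union>j\<in>{1..k}.
      if i = j then {} else edges_between E (Vrow k P i) (Vcol k P j))"

definition ktg_partition ::
  "'a set \<Rightarrow> ('a \<times> 'a) set \<Rightarrow> nat \<Rightarrow> real \<Rightarrow> real \<Rightarrow> (nat \<Rightarrow> nat \<Rightarrow> 'a set) \<Rightarrow> bool" where
  "ktg_partition V E k \<tau> \<gamma> P \<longleftrightarrow> k2_partition V k P \<and>
     real (card (bad_edges k P E)) \<le> \<gamma> * real (card V) ^ 2 \<and>
     (\<forall>i\<in>{1..k}. real (card (Vrow k P i)) \<ge> \<tau> * real (card V) \<and>
                  real (card (Vcol k P i)) \<ge> \<tau> * real (card V))"

definition extremal_ktg_partition ::
  "'a set \<Rightarrow> ('a \<times> 'a) set \<Rightarrow> nat \<Rightarrow> real \<Rightarrow> real \<Rightarrow> (nat \<Rightarrow> nat \<Rightarrow> 'a set) \<Rightarrow> bool" where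
  "extremal_ktg_partition V E k \<tau> \<gamma> P \<longleftrightarrow> ktg_partition V E k \<tau> \<gamma> P \<and>
     (\<forall>P'. ktg_partition V E k \<tau> \<gamma> P' \<longrightarrow> card (bad_edges k P E) \<le> card (bad_edges k P' E))"

end

theory Submission
  imports Defs
begin

(* Moving a single vertex w from its cell V_ij to V_i'j leaves every column unchanged and only
   changes which out-edges of w are good: the number of bad edges drops by
   d+_{V_*i'}(w) - d+_{V_*i}(w). Hence, if some column V_*i' received more out-edges of w than
   w's own column V_*i, the moved partition would have fewer bad edges. It is still a
   (k^2,tau,gamma)-partition, because for gamma << tau << alpha every row and column has at least
   tau n + 1 vertices: a row facing a column of size about tau n sends about tau alpha n^2 / 2 edges
   outside that column, and all of them are bad. The bounds d/2 and d/k follow by distributing the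
   d out-edges of w over the columns, and the in-degree statements are the out-degree statements
   for the reversed digraph with the transposed partition. *)

lemma k2_partition_cell_unique:
  assumes "k2_partition V k P" "x \<in> {1..k}" "y \<in> {1..k}" "x' \<in> {1..k}" "y' \<in> {1..k}"
    and "a \<in> P x y" "a \<in> P x' y'"
  shows "x = x' \<and> y = y'"
  using assms unfolding k2_partition_def by blast

lemma Vrow_unique:
  "\<lbrakk>k2_partition V k P; x \<in> {1..k}; x' \<in> {1..k}; a \<in> Vrow k P x; a \<in> Vrow k P x'\<rbrakk> \<Longrightarrow> x = x'"
  unfolding Vrow_def by (blast dest: k2_partition_cell_unique)

lemma Vcol_unique:
  "\<lbrakk>k2_partition V k P; y \<in> {1..k}; y' \<in> {1..k}; a \<in> Vcol k P y; a \<in> Vcol k P y'\<rbrakk> \<Longrightarrow> y = y'"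
  unfolding Vcol_def by (blast dest: k2_partition_cell_unique)

lemma Union_Vrow: "k2_partition V k P \<Longrightarrow> (\<Union>x\<in>{1..k}. Vrow k P x) = V"
  unfolding k2_partition_def Vrow_def by blast

lemma Union_Vcol: "k2_partition V k P \<Longrightarrow> (\<Union>y\<in>{1..k}. Vcol k P y) = V"
  unfolding k2_partition_def Vcol_def by blast

lemma Vrow_subset: "\<lbrakk>k2_partition V k P; x \<in> {1..k}\<rbrakk> \<Longrightarrow> Vrow k P x \<subseteq> V"
  using Union_Vrow by blast

lemma Vcol_subset: "\<lbrakk>k2_partition V k P; y \<in> {1..k}\<rbrakk> \<Longrightarrow> Vcol k P y \<subseteq> V"
  using Union_Vcol by blast

lemma bad_edge_iff_outside_Vcol:
  assumes "E \<subseteq> V \<times> V" "k2_partition V k P" "i \<in> {1..k}" "a \<in> Vrow k P i"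
  shows "(a, b) \<in> bad_edges k P E \<longleftrightarrow> (a, b) \<in> E \<and> b \<notin> Vcol k P i"
proof
  assume "(a, b) \<in> bad_edges k P E"
  then obtain x y where "x \<in> {1..k}" "y \<in> {1..k}" "x \<noteq> y" "(a, b) \<in> E"
      "a \<in> Vrow k P x" "b \<in> Vcol k P y"
    unfolding bad_edges_def edges_between_def by (auto split: if_splits)
  with assms show "(a, b) \<in> E \<and> b \<notin> Vcol k P i"
    using Vrow_unique Vcol_unique by metis
next
  assume ab: "(a, b) \<in> E \<and> b \<notin> Vcol k P i"
  then obtain y where "y \<in> {1..k}" "b \<in> Vcol k P y"
    using assms(1) Union_Vcol[OF assms(2)] by blast
  moreover have "y \<noteq> i" using ab calculation by blast
  ultimately show "(a, b) \<in> bad_edges k P E"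
    using ab assms(3,4) unfolding bad_edges_def edges_between_def by fastforce
qed

lemma outdeg_good_edges:
  assumes "E \<subseteq> V \<times> V" "k2_partition V k P" "i \<in> {1..k}" "v \<in> Vrow k P i"
  shows "outdeg_in (good_edges k P E) V v = outdeg_in E (Vcol k P i) v"
proof -
  have "{u \<in> V. (v, u) \<in> good_edges k P E} = {u \<in> Vcol k P i. (v, u) \<in> E}"
    using assms Vrow_unique[OF assms(2)] Vcol_subset[OF assms(2)]
    unfolding good_edges_def edges_between_def by blast
  then show ?thesis unfolding outdeg_in_def by simp
qed

lemma bad_edges_subset: "bad_edges k P E \<subseteq> E"
  unfolding bad_edges_def edges_between_def by auto

lemma finite_bad_edges: "\<lbrakk>E \<subseteq> V \<times> V; finite V\<rbrakk> \<Longrightarrow> finite (bad_edges k P E)"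
  using bad_edges_subset by (metis finite_SigmaI finite_subset)

lemma outdeg_in_mono: "\<lbrakk>A \<subseteq> B; finite B\<rbrakk> \<Longrightarrow> outdeg_in E A v \<le> outdeg_in E B v"
  unfolding outdeg_in_def by (rule card_mono) auto

lemma outdeg_in_le_card: "finite A \<Longrightarrow> outdeg_in E A v \<le> card A"
  unfolding outdeg_in_def by (rule card_mono) auto

lemma outdeg_in_Un_disjoint:
  "\<lbrakk>finite A; finite B; A \<inter> B = {}\<rbrakk> \<Longrightarrow>
     outdeg_in E (A \<union> B) v = outdeg_in E A v + outdeg_in E B v"
  unfolding outdeg_in_def by (subst card_Un_disjoint[symmetric]) (auto intro: arg_cong[where f = card])

lemma outdeg_in_UN_disjoint:
  assumes "finite I" "\<forall>i\<in>I. finite (A i)" "\<forall>i\<in>I. \<forall>j\<in>I. i \<noteq> j \<longrightarrow> A i \<inter> A j = {}"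
  shows "outdeg_in E (\<Union>i\<in>I. A i) v = (\<Sum>i\<in>I. outdeg_in E (A i) v)"
proof -
  have "{u \<in> \<Union>i\<in>I. A i. (v, u) \<in> E} = (\<Union>i\<in>I. {u \<in> A i. (v, u) \<in> E})" by blast
  then show ?thesis
    unfolding outdeg_in_def using assms by (simp add: card_UN_disjoint disjoint_iff)
qed

lemma regular_digraph_finite: "regular_digraph V E d \<Longrightarrow> finite V"
  and regular_digraph_edges: "regular_digraph V E d \<Longrightarrow> E \<subseteq> V \<times> V"
  and regular_digraph_outdeg: "\<lbrakk>regular_digraph V E d; v \<in> V\<rbrakk> \<Longrightarrow> outdeg_in E V v = d"
  unfolding regular_digraph_def digraph_def by auto

lemma regular_outdeg_compl_add:
  assumes "regular_digraph V E d" "v \<in> V" "S \<subseteq> V"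
  shows "outdeg_in E (V - S) v + outdeg_in E S v = d"
proof -
  have "finite V" using assms(1) by (rule regular_digraph_finite)
  have "d = outdeg_in E ((V - S) \<union> S) v"
    using assms by (simp add: Un_absorb2 regular_digraph_outdeg)
  also have "\<dots> = outdeg_in E (V - S) v + outdeg_in E S v"
    using \<open>finite V\<close> assms(3) by (intro outdeg_in_Un_disjoint) (auto intro: finite_subset)
  finally show ?thesis by simp
qed

lemma regular_sum_outdeg_Vcol:
  assumes "regular_digraph V E d" "k2_partition V k P" "v \<in> V"
  shows "(\<Sum>y\<in>{1..k}. outdeg_in E (Vcol k P y) v) = d"
proof -
  have "finite V" using assms(1) by (rule regular_digraph_finite)
  then have "\<forall>y\<in>{1..k}. finite (Vcol k P y)"
    using Vcol_subset[OF assms(2)] finite_subset by blast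
  then have "(\<Sum>y\<in>{1..k}. outdeg_in E (Vcol k P y) v) = outdeg_in E (\<Union>y\<in>{1..k}. Vcol k P y) v"
    using Vcol_unique[OF assms(2)] by (subst outdeg_in_UN_disjoint) auto
  with assms show ?thesis using Union_Vcol[OF assms(2)] by (simp add: regular_digraph_outdeg)
qed

section \<open>Moving a single vertex\<close>

lemma card_bad_edges_at_vertex:
  assumes reg: "regular_digraph V E d" and P: "k2_partition V k P"
    and i: "i \<in> {1..k}" and w: "w \<in> Vrow k P i"
  shows "card (bad_edges k P E) + outdeg_in E (Vcol k P i) w
           = card {e \<in> bad_edges k P E. fst e \<noteq> w} + d"
proof -
  have EV: "E \<subseteq> V \<times> V" and fin: "finite V"
    using reg by (auto dest: regular_digraph_edges regular_digraph_finite)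
  have wV: "w \<in> V" using Vrow_subset[OF P i] w by blast
  define out_w where "out_w = {u \<in> V - Vcol k P i. (w, u) \<in> E}"
  define rest where "rest = {e \<in> bad_edges k P E. fst e \<noteq> w}"
  have "e \<in> bad_edges k P E \<longleftrightarrow> e \<in> rest \<or> e \<in> Pair w ` out_w" for e
  proof (cases e)
    case (Pair a b)
    show ?thesis
    proof (cases "a = w")
      case True
      then show ?thesis
        using Pair bad_edge_iff_outside_Vcol[OF EV P i w, of b] EV
        unfolding rest_def out_w_def by auto
    qed (use Pair in \<open>auto simp: rest_def out_w_def\<close>)
  qed
  then have split: "bad_edges k P E = rest \<union> Pair w ` out_w" by blast
  have "finite (bad_edges k P E)" using EV fin by (rule finite_bad_edges)
  moreover have "rest \<inter> Pair w ` out_w = {}" unfolding rest_def by auto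
  ultimately have "card (bad_edges k P E) = card rest + card (Pair w ` out_w)"
    unfolding split by (simp add: card_Un_disjoint)
  also have "card (Pair w ` out_w) = outdeg_in E (V - Vcol k P i) w"
    unfolding out_w_def outdeg_in_def by (simp add: card_image inj_on_def)
  finally show ?thesis
    using regular_outdeg_compl_add[OF reg wV Vcol_subset[OF P i]] unfolding rest_def by linarith
qed

lemma bad_edges_not_from_eq:
  assumes EV: "E \<subseteq> V \<times> V" and P: "k2_partition V k P" and Q: "k2_partition V k Q"
    and cols: "\<forall>y\<in>{1..k}. Vcol k Q y = Vcol k P y"
    and rows: "\<forall>x\<in>{1..k}. \<forall>a. a \<noteq> w \<longrightarrow> (a \<in> Vrow k Q x \<longleftrightarrow> a \<in> Vrow k P x)"
  shows "{e \<in> bad_edges k Q E. fst e \<noteq> w} = {e \<in> bad_edges k P E. fst e \<noteq> w}"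
proof -
  have "(a, b) \<in> bad_edges k Q E \<longleftrightarrow> (a, b) \<in> bad_edges k P E"
    if aw: "a \<noteq> w" and ab: "(a, b) \<in> E" for a b
  proof -
    obtain x where x: "x \<in> {1..k}" "a \<in> Vrow k P x"
      using ab EV Union_Vrow[OF P] by blast
    then have "a \<in> Vrow k Q x" using rows aw by blast
    with x show ?thesis
      using bad_edge_iff_outside_Vcol[OF EV P] bad_edge_iff_outside_Vcol[OF EV Q] cols by metis
  qed
  then show ?thesis using bad_edges_subset by fastforce
qed

definition move_vertex :: "'a \<Rightarrow> nat \<Rightarrow> nat \<Rightarrow> (nat \<Rightarrow> nat \<Rightarrow> 'a set) \<Rightarrow> nat \<Rightarrow> nat \<Rightarrow> 'a set" where
  "move_vertex w x y P = (\<lambda>a b. if (a, b) = (x, y) then insert w (P a b) else P a b - {w})"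

lemma mem_move_vertex:
  "z \<in> move_vertex w x y P a b \<longleftrightarrow> (if z = w then (a, b) = (x, y) else z \<in> P a b)"
  unfolding move_vertex_def by auto

lemma k2_partition_move_vertex:
  assumes "k2_partition V k P" "w \<in> V" "x \<in> {1..k}" "y \<in> {1..k}"
  shows "k2_partition V k (move_vertex w x y P)"
  unfolding k2_partition_def
proof (intro conjI ballI impI)
  fix a b a' b' assume "a \<in> {1..k}" "b \<in> {1..k}" "a' \<in> {1..k}" "b' \<in> {1..k}" "(a, b) \<noteq> (a', b')"
  moreover have "P a b \<inter> P a' b' = {}"
    using assms(1) calculation unfolding k2_partition_def by blast
  ultimately show "move_vertex w x y P a b \<inter> move_vertex w x y P a' b' = {}"
    unfolding disjoint_iff mem_move_vertex by auto
next
  show "(\<Union>a\<in>{1..k}. \<Union>b\<in>{1..k}. move_vertex w x y P a b) = V"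
  proof (intro equalityI subsetI)
    fix z assume "z \<in> (\<Union>a\<in>{1..k}. \<Union>b\<in>{1..k}. move_vertex w x y P a b)"
    then obtain a b where ab: "a \<in> {1..k}" "b \<in> {1..k}" "z \<in> move_vertex w x y P a b" by blast
    show "z \<in> V"
    proof (cases "z = w")
      case False
      then have "z \<in> P a b" using ab(3) by (simp add: mem_move_vertex)
      then show ?thesis using assms(1) ab(1,2) unfolding k2_partition_def by blast
    qed (use assms(2) in simp)
  next
    fix z assume "z \<in> V"
    then obtain a b where ab: "a \<in> {1..k}" "b \<in> {1..k}" "z \<in> P a b"
      using assms(1) unfolding k2_partition_def by blast
    have "z \<in> move_vertex w x y P x y \<or> z \<in> move_vertex w x y P a b"
      using ab(3) by (simp add: mem_move_vertex)
    then show "z \<in> (\<Union>a\<in>{1..k}. \<Union>b\<in>{1..k}. move_vertex w x y P a b)"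
      using ab(1,2) assms(3,4) by blast
  qed
qed

lemma mem_Vrow_move_vertex:
  "y \<in> {1..k} \<Longrightarrow> z \<in> Vrow k (move_vertex w x y P) x' \<longleftrightarrow> (if z = w then x' = x else z \<in> Vrow k P x')"
  unfolding Vrow_def by (cases "z = w") (auto simp: mem_move_vertex)

lemma mem_Vcol_move_vertex:
  "x \<in> {1..k} \<Longrightarrow> z \<in> Vcol k (move_vertex w x y P) y' \<longleftrightarrow> (if z = w then y' = y else z \<in> Vcol k P y')"
  unfolding Vcol_def by (cases "z = w") (auto simp: mem_move_vertex)

lemma Vcol_move_vertex:
  assumes "k2_partition V k P" "w \<in> Vcol k P y" "x \<in> {1..k}" "y \<in> {1..k}" "y' \<in> {1..k}"
  shows "Vcol k (move_vertex w x y P) y' = Vcol k P y'"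
proof -
  have "w \<in> Vcol k P y' \<longleftrightarrow> y' = y"
    using assms Vcol_unique[OF assms(1)] by blast
  then show ?thesis by (auto simp: mem_Vcol_move_vertex[OF assms(3)] split: if_splits)
qed

lemma card_bad_edges_move_vertex:
  assumes reg: "regular_digraph V E d" and P: "k2_partition V k P"
    and ij: "i \<in> {1..k}" "j \<in> {1..k}" "w \<in> P i j" and i': "i' \<in> {1..k}"
  shows "card (bad_edges k (move_vertex w i' j P) E) + outdeg_in E (Vcol k P i') w
           = card (bad_edges k P E) + outdeg_in E (Vcol k P i) w"
proof -
  let ?Q = "move_vertex w i' j P"
  have EV: "E \<subseteq> V \<times> V" using reg by (rule regular_digraph_edges)
  have w_row: "w \<in> Vrow k P i" and w_col: "w \<in> Vcol k P j"
    using ij unfolding Vrow_def Vcol_def by auto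
  then have wV: "w \<in> V" using Vrow_subset[OF P ij(1)] by blast
  have Q: "k2_partition V k ?Q" using k2_partition_move_vertex[OF P wV i' ij(2)] .
  have cols: "\<forall>y\<in>{1..k}. Vcol k ?Q y = Vcol k P y"
    using Vcol_move_vertex[OF P w_col i' ij(2)] by blast
  have "w \<in> Vrow k ?Q i'" by (simp add: mem_Vrow_move_vertex[OF ij(2)])
  from card_bad_edges_at_vertex[OF reg Q i' this]
  have "card (bad_edges k ?Q E) + outdeg_in E (Vcol k P i') w
      = card {e \<in> bad_edges k ?Q E. fst e \<noteq> w} + d"
    using cols i' by simp
  also have "{e \<in> bad_edges k ?Q E. fst e \<noteq> w} = {e \<in> bad_edges k P E. fst e \<noteq> w}"
  proof (rule bad_edges_not_from_eq[OF EV P Q cols])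
    show "\<forall>x\<in>{1..k}. \<forall>a. a \<noteq> w \<longrightarrow> (a \<in> Vrow k ?Q x \<longleftrightarrow> a \<in> Vrow k P x)"
      by (simp add: mem_Vrow_move_vertex[OF ij(2)])
  qed
  finally show ?thesis using card_bad_edges_at_vertex[OF reg P ij(1) w_row] by linarith
qed

section \<open>Extremal partitions\<close>

lemma sum_outdeg_outside_Vcol_le_bad_edges:
  assumes EV: "E \<subseteq> V \<times> V" and fin: "finite V" and P: "k2_partition V k P" and x: "x \<in> {1..k}"
  shows "(\<Sum>v\<in>Vrow k P x. outdeg_in E (V - Vcol k P x) v) \<le> card (bad_edges k P E)"
proof -
  let ?S = "SIGMA v : Vrow k P x. {u \<in> V - Vcol k P x. (v, u) \<in> E}"
  have "?S \<subseteq> bad_edges k P E"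
    using bad_edge_iff_outside_Vcol[OF EV P x] by blast
  moreover have "finite (bad_edges k P E)" using EV fin by (rule finite_bad_edges)
  ultimately have "card ?S \<le> card (bad_edges k P E)" by (rule card_mono[rotated])
  moreover have "finite (Vrow k P x)" using Vrow_subset[OF P x] fin by (rule finite_subset)
  ultimately show ?thesis using fin unfolding outdeg_in_def by simp
qed

lemma ktg_partition_Vcol_card_gt:
  assumes reg: "regular_digraph V E d" and ktg: "ktg_partition V E k \<tau> \<gamma> P"
    and d: "\<alpha> * real (card V) \<le> real d" and n: "4 / \<alpha> \<le> real (card V)"
    and \<alpha>: "0 < \<alpha>" and \<tau>: "0 < \<tau>" "\<tau> \<le> \<alpha> / 4" and \<gamma>: "\<gamma> \<le> \<tau> * \<alpha> / 4"
    and x: "x \<in> {1..k}"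
  shows "\<tau> * real (card V) + 1 \<le> real (card (Vcol k P x))"
proof (rule ccontr)
  assume "\<not> ?thesis"
  then have small: "real (card (Vcol k P x)) < \<tau> * real (card V) + 1" by simp
  define N where "N = real (card V)"
  have EV: "E \<subseteq> V \<times> V" and fin: "finite V"
    using reg by (auto dest: regular_digraph_edges regular_digraph_finite)
  have P: "k2_partition V k P" using ktg unfolding ktg_partition_def by blast
  have "4 \<le> \<alpha> * N" using n \<alpha> unfolding N_def by (simp add: divide_le_eq mult.commute)
  then have "0 < \<alpha> * N" by linarith
  then have N: "0 < N" using \<alpha> by (simp add: zero_less_mult_iff)
  have many_out: "\<alpha> * N / 2 \<le> real (outdeg_in E (V - Vcol k P x) v)" if v: "v \<in> Vrow k P x" for v
  proof -
    have "outdeg_in E (Vcol k P x) v \<le> card (Vcol k P x)"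
      using Vcol_subset[OF P x] fin by (intro outdeg_in_le_card) (rule finite_subset)
    moreover have "outdeg_in E (V - Vcol k P x) v + outdeg_in E (Vcol k P x) v = d"
      using regular_outdeg_compl_add[OF reg _ Vcol_subset[OF P x]] Vrow_subset[OF P x] v by blast
    moreover have "\<tau> * N \<le> \<alpha> * N / 4" using \<tau> N by simp
    ultimately show ?thesis using small d \<open>4 \<le> \<alpha> * N\<close> unfolding N_def by linarith
  qed
  have "real (card (bad_edges k P E)) \<le> \<gamma> * N\<^sup>2"
    using ktg unfolding ktg_partition_def N_def by blast
  also have "\<dots> \<le> \<tau> * \<alpha> / 4 * N\<^sup>2" using \<gamma> by (intro mult_right_mono) auto
  also have "\<dots> < \<tau> * N * (\<alpha> * N / 2)"
    using \<alpha> \<tau> N by (simp add: power2_eq_square algebra_simps)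
  also have "\<dots> \<le> real (card (Vrow k P x)) * (\<alpha> * N / 2)"
    using ktg x \<alpha> N unfolding ktg_partition_def N_def by (intro mult_right_mono) auto
  also have "\<dots> \<le> (\<Sum>v\<in>Vrow k P x. real (outdeg_in E (V - Vcol k P x) v))"
    using sum_mono[OF many_out] by simp
  also have "\<dots> \<le> real (card (bad_edges k P E))"
    using sum_outdeg_outside_Vcol_le_bad_edges[OF EV fin P x] by (simp flip: of_nat_sum)
  finally show False by simp
qed

lemma ktg_partition_move_vertex:
  assumes reg: "regular_digraph V E d" and ktg: "ktg_partition V E k \<tau> \<gamma> P"
    and slack: "\<forall>x\<in>{1..k}. \<tau> * real (card V) + 1 \<le> real (card (Vrow k P x))"
    and ij: "i \<in> {1..k}" "j \<in> {1..k}" "w \<in> P i j" and i': "i' \<in> {1..k}"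
    and fewer: "card (bad_edges k (move_vertex w i' j P) E) \<le> card (bad_edges k P E)"
  shows "ktg_partition V E k \<tau> \<gamma> (move_vertex w i' j P)"
  unfolding ktg_partition_def
proof (intro conjI ballI)
  let ?Q = "move_vertex w i' j P"
  have fin: "finite V" using reg by (rule regular_digraph_finite)
  have P: "k2_partition V k P" using ktg unfolding ktg_partition_def by blast
  have w_col: "w \<in> Vcol k P j" using ij unfolding Vcol_def by blast
  have wV: "w \<in> V" using Vcol_subset[OF P ij(2)] w_col by blast
  show "k2_partition V k ?Q" using k2_partition_move_vertex[OF P wV i' ij(2)] .
  show "real (card (bad_edges k ?Q E)) \<le> \<gamma> * real (card V) ^ 2"
    using fewer ktg unfolding ktg_partition_def by (meson of_nat_le_iff order_trans)
  fix x assume x: "x \<in> {1..k}"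
  show "\<tau> * real (card V) \<le> real (card (Vcol k ?Q x))"
    using ktg x Vcol_move_vertex[OF P w_col i' ij(2) x] unfolding ktg_partition_def by simp
  have "Vrow k P x - {w} \<subseteq> Vrow k ?Q x"
    by (auto simp: mem_Vrow_move_vertex[OF ij(2)] split: if_splits)
  moreover have "finite (Vrow k ?Q x)"
    using Vrow_subset[OF k2_partition_move_vertex[OF P wV i' ij(2)] x] fin by (rule finite_subset)
  ultimately have "card (Vrow k P x - {w}) \<le> card (Vrow k ?Q x)" by (rule card_mono[rotated])
  moreover have "card (Vrow k P x) \<le> card (Vrow k P x - {w}) + 1"
    unfolding card_Diff_singleton_if by (simp split: if_splits) arith
  ultimately have "real (card (Vrow k P x)) \<le> real (card (Vrow k ?Q x)) + 1" by linarith
  then show "\<tau> * real (card V) \<le> real (card (Vrow k ?Q x))"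
    using slack[rule_format, OF x] by linarith
qed

lemma extremal_outdeg_Vcol_le_own:
  assumes reg: "regular_digraph V E d" and ext: "extremal_ktg_partition V E k \<tau> \<gamma> P"
    and slack: "\<forall>x\<in>{1..k}. \<tau> * real (card V) + 1 \<le> real (card (Vrow k P x))"
    and i: "i \<in> {1..k}" and w: "w \<in> Vrow k P i" and i': "i' \<in> {1..k}"
  shows "outdeg_in E (Vcol k P i') w \<le> outdeg_in E (Vcol k P i) w"
proof (rule ccontr)
  assume more: "\<not> ?thesis"
  obtain j where j: "j \<in> {1..k}" "w \<in> P i j" using w unfolding Vrow_def by blast
  have ktg: "ktg_partition V E k \<tau> \<gamma> P" and P: "k2_partition V k P"
    using ext unfolding extremal_ktg_partition_def ktg_partition_def by blast+
  \<comment> \<open>moving w into row i' turns more of its out-edges good and leaves all other edges alone\<close>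
  have fewer: "card (bad_edges k (move_vertex w i' j P) E) < card (bad_edges k P E)"
    using card_bad_edges_move_vertex[OF reg P i j i'] more by linarith
  then have "ktg_partition V E k \<tau> \<gamma> (move_vertex w i' j P)"
    by (intro ktg_partition_move_vertex[OF reg ktg slack i j i']) simp
  with ext have "card (bad_edges k P E) \<le> card (bad_edges k (move_vertex w i' j P) E)"
    unfolding extremal_ktg_partition_def by blast
  with fewer show False by simp
qed

lemma outdeg_Vcol_le_half:
  assumes reg: "regular_digraph V E d" and P: "k2_partition V k P"
    and ii': "i \<in> {1..k}" "i' \<in> {1..k}" "i' \<noteq> i" and v: "v \<in> V"
    and le: "outdeg_in E (Vcol k P i') v \<le> outdeg_in E (Vcol k P i) v"
  shows "real (outdeg_in E (Vcol k P i') v) \<le> real d / 2"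
proof -
  have fin: "finite V" using reg by (rule regular_digraph_finite)
  have "outdeg_in E (Vcol k P i') v + outdeg_in E (Vcol k P i) v
      = outdeg_in E (Vcol k P i' \<union> Vcol k P i) v"
    using Vcol_subset[OF P] Vcol_unique[OF P] ii' fin
    by (intro outdeg_in_Un_disjoint[symmetric]) (auto intro: finite_subset)
  also have "\<dots> \<le> outdeg_in E V v"
    using Vcol_subset[OF P] ii' fin by (intro outdeg_in_mono) auto
  also have "\<dots> = d" using reg v by (rule regular_digraph_outdeg)
  finally show ?thesis using le by simp
qed

lemma outdeg_good_edges_ge:
  assumes reg: "regular_digraph V E d" and P: "k2_partition V k P"
    and i: "i \<in> {1..k}" and v: "v \<in> Vrow k P i"
    and max: "\<forall>i'\<in>{1..k}. outdeg_in E (Vcol k P i') v \<le> outdeg_in E (Vcol k P i) v"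
  shows "real d / real k \<le> real (outdeg_in (good_edges k P E) V v)"
proof -
  have "d = (\<Sum>i'\<in>{1..k}. outdeg_in E (Vcol k P i') v)"
    using regular_sum_outdeg_Vcol[OF reg P] Vrow_subset[OF P i] v by auto
  also have "\<dots> \<le> k * outdeg_in E (Vcol k P i) v"
    using sum_mono[of "{1..k}", OF max[rule_format]] by simp
  finally have "real d \<le> real k * real (outdeg_in E (Vcol k P i) v)"
    by (metis of_nat_le_iff of_nat_mult)
  moreover have "0 < k" using i by simp
  ultimately show ?thesis
    using outdeg_good_edges[OF regular_digraph_edges[OF reg] P i v]
    by (simp add: divide_le_eq mult.commute)
qed

lemma extremal_outdeg_bounds:
  assumes reg: "regular_digraph V E d" and ext: "extremal_ktg_partition V E k \<tau> \<gamma> P"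
    and slack: "\<forall>x\<in>{1..k}. \<tau> * real (card V) + 1 \<le> real (card (Vrow k P x))"
    and i: "i \<in> {1..k}" and w: "w \<in> Vrow k P i"
  shows "(\<forall>i'\<in>{1..k}. outdeg_in E (Vcol k P i') w \<le> outdeg_in E (Vcol k P i) w) \<and>
         (\<forall>i'\<in>{1..k}. i' \<noteq> i \<longrightarrow> real (outdeg_in E (Vcol k P i') w) \<le> real d / 2) \<and>
         real d / real k \<le> real (outdeg_in (good_edges k P E) V w)"
proof -
  have P: "k2_partition V k P"
    using ext unfolding extremal_ktg_partition_def ktg_partition_def by blast
  have max: "\<forall>i'\<in>{1..k}. outdeg_in E (Vcol k P i') w \<le> outdeg_in E (Vcol k P i) w"
    using extremal_outdeg_Vcol_le_own[OF reg ext slack i w] by blast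
  moreover have "w \<in> V" using Vrow_subset[OF P i] w by blast
  ultimately show ?thesis
    using outdeg_Vcol_le_half[OF reg P i] outdeg_good_edges_ge[OF reg P i w] by blast
qed

section \<open>Transposition and in-degrees\<close>

definition transpose_cells :: "(nat \<Rightarrow> nat \<Rightarrow> 'a set) \<Rightarrow> nat \<Rightarrow> nat \<Rightarrow> 'a set" where
  "transpose_cells P a b = P b a"

lemma transpose_cells_transpose_cells [simp]: "transpose_cells (transpose_cells P) = P"
  by (simp add: transpose_cells_def fun_eq_iff)

lemma Vrow_transpose_cells [simp]: "Vrow k (transpose_cells P) x = Vcol k P x"
  and Vcol_transpose_cells [simp]: "Vcol k (transpose_cells P) x = Vrow k P x"
  unfolding transpose_cells_def Vrow_def Vcol_def by simp_all

lemma k2_partition_transpose_cells [simp]: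
  "k2_partition V k (transpose_cells P) \<longleftrightarrow> k2_partition V k P"
  unfolding k2_partition_def transpose_cells_def by blast

lemma bad_edges_transpose_cells [simp]:
  "bad_edges k (transpose_cells P) (E\<inverse>) = (bad_edges k P E)\<inverse>"
  unfolding bad_edges_def edges_between_def by (auto split: if_splits)

lemma good_edges_transpose_cells [simp]:
  "good_edges k (transpose_cells P) (E\<inverse>) = (good_edges k P E)\<inverse>"
  unfolding good_edges_def edges_between_def by auto

lemma ktg_partition_transpose_cells [simp]:
  "ktg_partition V (E\<inverse>) k \<tau> \<gamma> (transpose_cells P) \<longleftrightarrow> ktg_partition V E k \<tau> \<gamma> P"
  unfolding ktg_partition_def by auto

lemma extremal_ktg_partition_transpose_cells [simp]:
  "extremal_ktg_partition V (E\<inverse>) k \<tau> \<gamma> (transpose_cells P) \<longleftrightarrow> extremal_ktg_partition V E k \<tau> \<gamma> P"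
  unfolding extremal_ktg_partition_def
  by (metis ktg_partition_transpose_cells bad_edges_transpose_cells card_inverse
        transpose_cells_transpose_cells converse_converse)

lemma regular_digraph_converse [simp]: "regular_digraph V (E\<inverse>) d \<longleftrightarrow> regular_digraph V E d"
  unfolding regular_digraph_def digraph_def outdeg_in_def indeg_in_def by auto

lemma indeg_in_eq_outdeg_in_converse: "indeg_in E S v = outdeg_in (E\<inverse>) S v"
  unfolding indeg_in_def outdeg_in_def by simp

lemma extremal_indeg_bounds:
  assumes reg: "regular_digraph V E d" and ext: "extremal_ktg_partition V E k \<tau> \<gamma> P"
    and slack: "\<forall>y\<in>{1..k}. \<tau> * real (card V) + 1 \<le> real (card (Vcol k P y))"
    and j: "j \<in> {1..k}" and w: "w \<in> Vcol k P j"
  shows "(\<forall>j'\<in>{1..k}. indeg_in E (Vrow k P j') w \<le> indeg_in E (Vrow k P j) w) \<and>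
         (\<forall>j'\<in>{1..k}. j' \<noteq> j \<longrightarrow> real (indeg_in E (Vrow k P j') w) \<le> real d / 2) \<and>
         real d / real k \<le> real (indeg_in (good_edges k P E) V w)"
proof -
  have "regular_digraph V (E\<inverse>) d" "extremal_ktg_partition V (E\<inverse>) k \<tau> \<gamma> (transpose_cells P)"
    "\<forall>x\<in>{1..k}. \<tau> * real (card V) + 1 \<le> real (card (Vrow k (transpose_cells P) x))"
    "w \<in> Vrow k (transpose_cells P) j"
    using reg ext slack w by simp_all
  from extremal_outdeg_bounds[OF this(1-3) j this(4)] show ?thesis
    unfolding indeg_in_eq_outdeg_in_converse
    by (simp only: Vcol_transpose_cells good_edges_transpose_cells) blast
qed

lemma extremal_partition_degree_bounds:
  assumes \<alpha>: "0 < \<alpha>" and \<tau>: "0 < \<tau>" "\<tau> \<le> \<alpha> / 4" and \<gamma>: "\<gamma> \<le> \<tau> * \<alpha> / 4"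
    and n: "4 / \<alpha> \<le> real (card V)" and reg: "regular_digraph V E d"
    and d: "\<alpha> * real (card V) \<le> real d" and ext: "extremal_ktg_partition V E k \<tau> \<gamma> P"
  shows "(\<forall>i\<in>{1..k}. \<forall>j\<in>{1..k}. \<forall>w\<in>P i j.
           (\<forall>i'\<in>{1..k}. outdeg_in E (Vcol k P i') w \<le> outdeg_in E (Vcol k P i) w) \<and>
           (\<forall>j'\<in>{1..k}. indeg_in E (Vrow k P j') w \<le> indeg_in E (Vrow k P j) w) \<and>
           (\<forall>i'\<in>{1..k}. i' \<noteq> i \<longrightarrow> real (outdeg_in E (Vcol k P i') w) \<le> real d / 2) \<and>
           (\<forall>j'\<in>{1..k}. j' \<noteq> j \<longrightarrow> real (indeg_in E (Vrow k P j') w) \<le> real d / 2)) \<and>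
         (\<forall>v\<in>V. real d / real k \<le> real (outdeg_in (good_edges k P E) V v) \<and>
                 real d / real k \<le> real (indeg_in (good_edges k P E) V v))"
proof -
  have ktg: "ktg_partition V E k \<tau> \<gamma> P" and P: "k2_partition V k P"
    using ext unfolding extremal_ktg_partition_def ktg_partition_def by blast+
  have col_slack: "\<forall>x\<in>{1..k}. \<tau> * real (card V) + 1 \<le> real (card (Vcol k P x))"
    using ktg_partition_Vcol_card_gt[OF reg ktg d n \<alpha> \<tau> \<gamma>] by blast
  have row_slack: "\<forall>x\<in>{1..k}. \<tau> * real (card V) + 1 \<le> real (card (Vrow k P x))"
    using ktg_partition_Vcol_card_gt[of V "E\<inverse>" d k \<tau> \<gamma> "transpose_cells P"] reg ktg d n \<alpha> \<tau> \<gamma>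
    by simp
  note out = extremal_outdeg_bounds[OF reg ext row_slack]
  note into = extremal_indeg_bounds[OF reg ext col_slack]
  show ?thesis
  proof (rule conjI; intro ballI)
    fix i j w assume "i \<in> {1..k}" "j \<in> {1..k}" "w \<in> P i j"
    moreover from this have "w \<in> Vrow k P i" "w \<in> Vcol k P j"
      unfolding Vrow_def Vcol_def by blast+
    ultimately show "(\<forall>i'\<in>{1..k}. outdeg_in E (Vcol k P i') w \<le> outdeg_in E (Vcol k P i) w) \<and>
        (\<forall>j'\<in>{1..k}. indeg_in E (Vrow k P j') w \<le> indeg_in E (Vrow k P j) w) \<and>
        (\<forall>i'\<in>{1..k}. i' \<noteq> i \<longrightarrow> real (outdeg_in E (Vcol k P i') w) \<le> real d / 2) \<and>
        (\<forall>j'\<in>{1..k}. j' \<noteq> j \<longrightarrow> real (indeg_in E (Vrow k P j') w) \<le> real d / 2)"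
      using out into by simp
  next
    fix v assume "v \<in> V"
    then obtain i j where "i \<in> {1..k}" "v \<in> Vrow k P i" "j \<in> {1..k}" "v \<in> Vcol k P j"
      using Union_Vrow[OF P] Union_Vcol[OF P] by blast
    then show "real d / real k \<le> real (outdeg_in (good_edges k P E) V v) \<and>
        real d / real k \<le> real (indeg_in (good_edges k P E) V v)"
      using out into by simp
  qed
qed

theorem proposition3p10:
  "\<exists>\<alpha>0>0. \<forall>\<alpha>. 0 < \<alpha> \<and> \<alpha> \<le> \<alpha>0 \<longrightarrow>
   (\<exists>\<tau>0>0. \<forall>\<tau>. 0 < \<tau> \<and> \<tau> \<le> \<tau>0 \<longrightarrow>
   (\<exists>\<gamma>0>0. \<forall>\<gamma>. 0 < \<gamma> \<and> \<gamma> \<le> \<gamma>0 \<longrightarrow>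
   (\<exists>n0::nat. \<forall>(V::'a set) E (d::nat) (k::nat) P.
      card V \<ge> n0 \<and> regular_digraph V E d \<and> real d \<ge> \<alpha> * real (card V) \<and>
      extremal_ktg_partition V E k \<tau> \<gamma> P \<longrightarrow>
      (\<forall>i\<in>{1..k}. \<forall>j\<in>{1..k}. \<forall>w\<in>P i j.
         (\<forall>i'\<in>{1..k}. outdeg_in E (Vcol k P i') w \<le> outdeg_in E (Vcol k P i) w) \<and>
         (\<forall>j'\<in>{1..k}. indeg_in E (Vrow k P j') w \<le> indeg_in E (Vrow k P j) w) \<and>
         (\<forall>i'\<in>{1..k}. i' \<noteq> i \<longrightarrow> real (outdeg_in E (Vcol k P i') w) \<le> real d / 2) \<and>
         (\<forall>j'\<in>{1..k}. j' \<noteq> j \<longrightarrow> real (indeg_in E (Vrow k P j') w) \<le> real d / 2)) \<and>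
      (\<forall>v\<in>V. real (outdeg_in (good_edges k P E) V v) \<ge> real d / real k \<and>
              real (indeg_in (good_edges k P E) V v) \<ge> real d / real k))))"
proof (rule exI[of _ "1::real"], intro conjI allI impI, goal_cases)
  case (2 \<alpha>)
  then have \<alpha>: "0 < \<alpha>" by simp
  show ?case
  proof (rule exI[of _ "\<alpha> / 4"], intro conjI allI impI, goal_cases)
    case (2 \<tau>)
    then have \<tau>: "0 < \<tau>" "\<tau> \<le> \<alpha> / 4" by simp_all
    show ?case
    proof (rule exI[of _ "\<tau> * \<alpha> / 4"], intro conjI allI impI, goal_cases)
      case (2 \<gamma>)
      then have \<gamma>: "\<gamma> \<le> \<tau> * \<alpha> / 4" by simp
      show ?case
      proof (rule exI[of _ "nat \<lceil>4 / \<alpha>\<rceil>"], intro allI impI, goal_cases)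
        case (1 V E d k P)
        then have "4 / \<alpha> \<le> real (card V)"
          using real_nat_ceiling_ge of_nat_mono order_trans by blast
        with 1 show ?case using extremal_partition_degree_bounds[OF \<alpha> \<tau> \<gamma>] by blast
      qed
    qed (use \<alpha> \<tau> in simp)
  qed (use \<alpha> in simp)
qed simp

end
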